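(* Let $\mu$ be a single-group classification problem, $f^*(x)=\mathbb E_\mu[Y\mid X=x]$, $r^*:=f^*\sharp\mu^X$, and fix $q\in\mathcal Q_k$. (i) For every randomized classifier $h:\mathcal X\to\mathcal Y$ with Markov kernel $K$ and $h\sharp\mu^X=q$, the measure $\gamma$ on $\Delta_k\times\mathcal Y$ defined by $\gamma(B\times\{y\})=\int_{(f^* )^{-1}(B)}K(x,\{y\})\,d\mu^X(x)$ belongs to $\Gamma(r^*,q)$ and $$\mathrm{Err}(h)=\frac12\int_{\Delta_k\times\mathcal Y}\|s-y\|_1\,d\gamma(s,y).$$ (ii) Conversely, for every $\gamma\in\Gamma(r^*,q)$, letting $\gamma(\cdot\mid s)$ denote a regular conditional distribution (disintegration) of $\gamma$ with respect to its first marginal, the randomized classifier $h$ with kernel $K(x,B)=\gamma(B\mid f^*(x))$ satisfies $h\sharp\mu^X=q$ and $\mathrm{Err}(h)=\frac12\int_{\Delta_k\times\mathcal Y}\|s-y\|_1\,d\gamma(s,y)$.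
   Context: Single-group setting. $\mathcal X$ is a standard Borel space, $k\ge2$, $\mathcal Y=\{e_1,\dots,e_k\}\subset\mathbb R^k$ the standard basis vectors, $\Delta_k=\{x\in\mathbb R^k:x\ge0,\sum_ix_i=1\}$. $\mu$ is a probability distribution of $(X,Y)$ on $\mathcal X\times\mathcal Y$, $\mu^X$ the law of $X$, and $f^*(x)=\mathbb E_\mu[Y\mid X=x]\in\Delta_k$ is the Bayes regressor. A randomized classifier $h:\mathcal X\to\mathcal Y$ is given by a Markov kernel $K$ with $\mathbb P(h(x)\in B)=K(x,B)$, its randomness independent of $(X,Y)$; $h\sharp\mu^X(B)=\int K(x,B)\,d\mu^X(x)$, $f^*\sharp\mu^X$ is the law of $f^*(X)$, and $\mathrm{Err}(h)=\mathbb P(h(X)\neq Y)$. $\mathcal Q_k$ is the set of probability distributions supported on $\mathcal Y$, and $\Gamma(p,q)$ the set of couplings of $p$ and $q$. *)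

theory Defs
  imports "HOL-Probability.Probability"
begin

text \<open>Labels: the finite type 'k indexes the standard basis vectors e_i of R^k.\<close>

definition onehot :: "'k::finite \<Rightarrow> real^'k" where
  "onehot i = axis i 1"

definition prob_simplex :: "(real^'k::finite) set" where
  "prob_simplex = {s. (\<forall>i. 0 \<le> s $ i) \<and> (\<Sum>i\<in>UNIV. s $ i) = 1}"

definition l1dist :: "real^'k::finite \<Rightarrow> real^'k \<Rightarrow> real" where
  "l1dist s y = (\<Sum>i\<in>UNIV. \<bar>s $ i - y $ i\<bar>)"

text \<open>Markov kernel from X to the finite label set: K x j = K(x,{e_j}).\<close>
definition markov_kernel_fin :: "'x measure \<Rightarrow> ('x \<Rightarrow> 'k::finite \<Rightarrow> real) \<Rightarrow> bool" where
  "markov_kernel_fin M K \<longleftrightarrow>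
     (\<forall>j. (\<lambda>x. K x j) \<in> borel_measurable M) \<and>
     (\<forall>x j. 0 \<le> K x j) \<and> (\<forall>x. (\<Sum>j\<in>UNIV. K x j) = 1)"

definition pushforward_eq :: "'x measure \<Rightarrow> ('x \<Rightarrow> 'k::finite \<Rightarrow> real) \<Rightarrow> 'k pmf \<Rightarrow> bool" where
  "pushforward_eq MX K q \<longleftrightarrow> (\<forall>j. (\<integral>x. K x j \<partial>MX) = pmf q j)"

text \<open>Err(h) = P(h(X) \<noteq> Y), with the randomness of h independent of (X,Y).\<close>
definition err :: "('x \<times> 'k::finite) measure \<Rightarrow> ('x \<Rightarrow> 'k \<Rightarrow> real) \<Rightarrow> real" where
  "err \<mu> K = (\<integral>(x,y). (\<Sum>j\<in>UNIV - {y}. K x j) \<partial>\<mu>)"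

definition couplings :: "'a measure \<Rightarrow> 'b measure \<Rightarrow> ('a \<times> 'b) measure set" where
  "couplings p q = {\<gamma>. sets \<gamma> = sets (p \<Otimes>\<^sub>M q) \<and>
                       distr \<gamma> p fst = p \<and> distr \<gamma> q snd = q}"

definition half_l1_cost :: "((real^'k::finite) \<times> 'k) measure \<Rightarrow> real" where
  "half_l1_cost \<gamma> = (1/2) * (\<integral>(s,j). l1dist s (onehot j) \<partial>\<gamma>)"

end

theory Submission
  imports Defs
begin

(* Conditionally on X = x, the label Y has law f*(x) and the prediction h(x) has law K(x,.),
   independently, so P(h(X) ~= Y | X = x) = sum_i f*_i(x) sum_{j ~= i} K(x,j).
   On the transport side ||s - e_y||_1 = 2 sum_{i ~= y} s_i on the simplex, and the y-slice of the
   coupling gamma is the image of K(x,y) dP_X(x) under f*; integrating the cost slice by slice gives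
   the same expression. Conversely, a disintegration kappa of a coupling yields the kernel
   kappa o f*, whose joint law with f* is again gamma. *)

lemma nonneg_sum_eq_1_le_1:
  fixes p :: "'k::finite \<Rightarrow> real"
  assumes "\<And>i. 0 \<le> p i" "(\<Sum>i\<in>UNIV. p i) = 1"
  shows "p j \<le> 1"
  using member_le_sum[of j UNIV p] assms by simp

lemma emeasure_density_eq_integral:
  fixes f :: "'a \<Rightarrow> real"
  assumes f: "integrable M f" "\<And>x. 0 \<le> f x" and A: "A \<in> sets M"
  shows "emeasure (density M f) A = ennreal (\<integral>x. indicator A x * f x \<partial>M)"
proof -
  have "emeasure (density M f) A = (\<integral>\<^sup>+x. ennreal (f x * indicator A x) \<partial>M)"
    using f A by (subst emeasure_density) (auto intro!: nn_integral_cong simp: indicator_def)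
  also have "\<dots> = ennreal (\<integral>x. f x * indicator A x \<partial>M)"
    using f A by (intro nn_integral_eq_integral integrable_real_mult_indicator) auto
  finally show ?thesis by (simp add: mult.commute)
qed

lemma nn_integral_slice:
  fixes M :: "('a \<times> 'b) measure"
  assumes sets_M: "sets M = sets (A \<Otimes>\<^sub>M count_space UNIV)" and sets_N: "sets N = sets A"
    and slice: "\<And>B. B \<in> sets A \<Longrightarrow> emeasure M (B \<times> {y}) = emeasure N B"
    and g: "g \<in> borel_measurable A"
  shows "(\<integral>\<^sup>+z. g (fst z) * indicator {y} (snd z) \<partial>M) = (\<integral>\<^sup>+s. g s \<partial>N)"
proof -
  have fst: "fst \<in> M \<rightarrow>\<^sub>M A" and snd: "snd \<in> M \<rightarrow>\<^sub>M count_space UNIV"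
    by (simp_all add: measurable_cong_sets[OF sets_M refl])
  have ind: "(\<lambda>z. indicator {y} (snd z) :: ennreal) \<in> borel_measurable M"
    using measurable_compose[OF snd, of "indicator {y}" borel] by simp
  define D where "D = density M (\<lambda>z. indicator {y} (snd z))"
  have "distr D A fst = N"
  proof (rule measure_eqI)
    fix B assume "B \<in> sets (distr D A fst)"
    then have B: "B \<in> sets A" by simp
    have "emeasure (distr D A fst) B = emeasure D (fst -` B \<inter> space M)"
      using fst B by (simp add: D_def emeasure_distr)
    also have "\<dots> = (\<integral>\<^sup>+z. indicator (B \<times> {y}) z \<partial>M)"
      using measurable_sets[OF fst B] ind sets_eq_imp_space_eq[OF sets_M] unfolding D_def
      by (subst emeasure_density)
         (auto intro!: nn_integral_cong simp: space_pair_measure indicator_def dest: sets.sets_into_space)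
    also have "\<dots> = emeasure N B"
      using B sets_M slice by simp
    finally show "emeasure (distr D A fst) B = emeasure N B" .
  qed (simp add: sets_N)
  then have "(\<integral>\<^sup>+s. g s \<partial>N) = (\<integral>\<^sup>+z. g (fst z) \<partial>D)"
    using fst g unfolding D_def by (auto intro: nn_integral_distr)
  also have "\<dots> = (\<integral>\<^sup>+z. g (fst z) * indicator {y} (snd z) \<partial>M)"
    using g fst ind unfolding D_def by (subst nn_integral_density) (auto simp: mult.commute)
  finally show ?thesis ..
qed

lemma nn_integral_sum_slices:
  fixes M :: "('a \<times> 'k::finite) measure"
  assumes sets_M: "sets M = sets (A \<Otimes>\<^sub>M count_space UNIV)"
    and sets_N: "\<And>y. sets (N y) = sets A"
    and slice: "\<And>B y. B \<in> sets A \<Longrightarrow> emeasure M (B \<times> {y}) = emeasure (N y) B"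
    and G: "\<And>y. G y \<in> borel_measurable A"
  shows "(\<integral>\<^sup>+z. G (snd z) (fst z) \<partial>M) = (\<Sum>y\<in>UNIV. \<integral>\<^sup>+s. G y s \<partial>N y)"
proof -
  have fst: "fst \<in> M \<rightarrow>\<^sub>M A" and snd: "snd \<in> M \<rightarrow>\<^sub>M count_space UNIV"
    by (simp_all add: measurable_cong_sets[OF sets_M refl])
  have "(\<integral>\<^sup>+z. G (snd z) (fst z) \<partial>M) = (\<integral>\<^sup>+z. (\<Sum>y\<in>UNIV. G y (fst z) * indicator {y} (snd z)) \<partial>M)"
    by (intro nn_integral_cong) (simp add: indicator_def if_distrib)
  also have "\<dots> = (\<Sum>y\<in>UNIV. \<integral>\<^sup>+z. G y (fst z) * indicator {y} (snd z) \<partial>M)"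
    using G fst snd by (intro nn_integral_sum) auto
  also have "\<dots> = (\<Sum>y\<in>UNIV. \<integral>\<^sup>+s. G y s \<partial>N y)"
    using nn_integral_slice[OF sets_M sets_N slice G] by simp
  finally show ?thesis .
qed

lemma distr_snd_eq_pmf_iff:
  fixes M :: "('a \<times> 'k::finite) measure"
  assumes sets_M: "sets M = sets (A \<Otimes>\<^sub>M count_space UNIV)"
  shows "distr M (measure_pmf q) snd = measure_pmf q \<longleftrightarrow>
           (\<forall>j. emeasure M (space A \<times> {j}) = pmf q j)"
proof -
  have snd: "snd \<in> M \<rightarrow>\<^sub>M measure_pmf q"
    by (simp add: measurable_cong_sets[OF sets_M refl])
  have space_M: "space M = space A \<times> UNIV"
    using sets_eq_imp_space_eq[OF sets_M] by (simp add: space_pair_measure)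
  have label: "emeasure (distr M (measure_pmf q) snd) {j} = emeasure M (space A \<times> {j})" for j
    using snd by (subst emeasure_distr) (auto simp: space_M intro!: arg_cong[where f="emeasure M"])
  show ?thesis
  proof
    assume "distr M (measure_pmf q) snd = measure_pmf q"
    then show "\<forall>j. emeasure M (space A \<times> {j}) = pmf q j"
      using label by (simp add: emeasure_pmf_single)
  next
    assume slices: "\<forall>j. emeasure M (space A \<times> {j}) = pmf q j"
    show "distr M (measure_pmf q) snd = measure_pmf q"
    proof (rule measure_eqI_countable)
      show "emeasure (distr M (measure_pmf q) snd) {j} = emeasure (measure_pmf q) {j}" for j
        using label slices by (simp add: emeasure_pmf_single)
    qed (auto simp: sets_eq_imp_space_eq)
  qed
qed

(* P(Y ~= Z) for independent labels Y ~ s and Z ~ p. *)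
definition mismatch_prob :: "real^'k::finite \<Rightarrow> ('k \<Rightarrow> real) \<Rightarrow> real" where
  "mismatch_prob s p = (\<Sum>i\<in>UNIV. s $ i * (\<Sum>j\<in>UNIV - {i}. p j))"

lemma mismatch_prob_nonneg:
  assumes "s \<in> prob_simplex" "\<And>j. 0 \<le> p j"
  shows "0 \<le> mismatch_prob s p"
  using assms unfolding mismatch_prob_def prob_simplex_def
  by (auto intro!: sum_nonneg mult_nonneg_nonneg)

lemma borel_measurable_mismatch_prob:
  assumes "f \<in> borel_measurable M" "\<And>j. (\<lambda>x. K x j) \<in> borel_measurable M"
  shows "(\<lambda>x. mismatch_prob (f x) (K x)) \<in> borel_measurable M"
  unfolding mismatch_prob_def using assms measurable_compose[OF assms(1) borel_measurable_nth]
  by (intro borel_measurable_sum borel_measurable_times) auto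

lemma l1dist_nonneg: "0 \<le> l1dist s t"
  unfolding l1dist_def by (simp add: sum_nonneg)

lemma l1dist_onehot:
  assumes "s \<in> prob_simplex"
  shows "l1dist s (onehot y) = 2 * (\<Sum>i\<in>UNIV - {y}. s $ i)"
proof -
  have nonneg: "\<And>i. 0 \<le> s $ i" and total: "(\<Sum>i\<in>UNIV. s $ i) = 1"
    using assms by (auto simp: prob_simplex_def)
  have "l1dist s (onehot y) = \<bar>s $ y - 1\<bar> + (\<Sum>i\<in>UNIV - {y}. \<bar>s $ i\<bar>)"
    unfolding l1dist_def onehot_def by (subst sum.remove[of UNIV y]) (auto simp: axis_def)
  also have "\<bar>s $ y - 1\<bar> = (\<Sum>i\<in>UNIV - {y}. s $ i)"
    using total nonneg_sum_eq_1_le_1[of "\<lambda>i. s $ i" y] nonneg by (simp add: sum_diff1)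
  finally show ?thesis using nonneg by simp
qed

lemma sum_mult_l1dist_onehot:
  assumes "s \<in> prob_simplex"
  shows "(\<Sum>y\<in>UNIV. p y * l1dist s (onehot y)) = 2 * mismatch_prob s p"
proof -
  have "(\<Sum>y\<in>UNIV. p y * l1dist s (onehot y)) = 2 * (\<Sum>y\<in>UNIV. p y * (\<Sum>i\<in>UNIV - {y}. s $ i))"
    using assms by (simp add: l1dist_onehot sum_distrib_left mult.left_commute)
  also have "(\<Sum>y\<in>UNIV. p y * (\<Sum>i\<in>UNIV - {y}. s $ i)) = (\<Sum>y\<in>UNIV. \<Sum>i\<in>UNIV. if i = y then 0 else p y * s $ i)"
    by (simp add: sum_distrib_left sum.If_cases Diff_eq Compl_eq)
  also have "\<dots> = (\<Sum>i\<in>UNIV. \<Sum>y\<in>UNIV. if i = y then 0 else p y * s $ i)"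
    by (rule sum.swap)
  also have "\<dots> = mismatch_prob s p"
    by (simp add: mismatch_prob_def sum_distrib_left sum.If_cases Diff_eq Compl_eq mult.commute)
  finally show ?thesis .
qed

(* gamma is the law of (f(X), h(X)) for X ~ M and h(X) ~ K(X,.). *)
definition joint_law ::
    "'x measure \<Rightarrow> ('x \<Rightarrow> real^'k::finite) \<Rightarrow> ('x \<Rightarrow> 'k \<Rightarrow> real) \<Rightarrow> ((real^'k) \<times> 'k) measure \<Rightarrow> bool" where
  "joint_law M f K \<gamma> \<longleftrightarrow> sets \<gamma> = sets (borel \<Otimes>\<^sub>M count_space UNIV) \<and>
     (\<forall>B\<in>sets borel. \<forall>y. emeasure \<gamma> (B \<times> {y}) = ennreal (\<integral>x. indicator (f -` B) x * K x y \<partial>M))"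

locale label_kernel = prob_space M for M :: "'x measure" +
  fixes f :: "'x \<Rightarrow> real^'k::finite" and K :: "'x \<Rightarrow> 'k \<Rightarrow> real"
  assumes space_M: "space M = UNIV"
    and f_measurable: "f \<in> borel_measurable M"
    and kernel: "markov_kernel_fin M K"
begin

lemma K_measurable: "(\<lambda>x. K x y) \<in> borel_measurable M"
  and K_nonneg: "0 \<le> K x y"
  and K_le_1: "K x y \<le> 1"
  using kernel nonneg_sum_eq_1_le_1[of "K x" y] by (auto simp: markov_kernel_fin_def)

lemma preimage_in_sets: "B \<in> sets borel \<Longrightarrow> f -` B \<in> sets M"
  using measurable_sets[OF f_measurable] by (simp add: space_M)

lemma ennreal_integral_indicator_K:
  "A \<in> sets M \<Longrightarrow> ennreal (\<integral>x. indicator A x * K x y \<partial>M) = emeasure (density M (\<lambda>x. K x y)) A"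
  by (intro emeasure_density_eq_integral[symmetric] integrable_const_bound[where B=1])
     (auto simp: K_nonneg K_le_1 K_measurable)

lemma joint_law_slice:
  assumes "joint_law M f K \<gamma>" "B \<in> sets borel"
  shows "emeasure \<gamma> (B \<times> {y}) = emeasure (distr (density M (\<lambda>x. K x y)) borel f) B"
  using assms f_measurable preimage_in_sets
  by (simp add: joint_law_def ennreal_integral_indicator_K emeasure_distr space_M)

lemma nn_integral_joint_law:
  assumes \<gamma>: "joint_law M f K \<gamma>" and G: "\<And>y. G y \<in> borel_measurable borel"
  shows "(\<integral>\<^sup>+z. G (snd z) (fst z) \<partial>\<gamma>) = (\<integral>\<^sup>+x. (\<Sum>y\<in>UNIV. ennreal (K x y) * G y (f x)) \<partial>M)"
proof -
  have "(\<integral>\<^sup>+z. G (snd z) (fst z) \<partial>\<gamma>) = (\<Sum>y\<in>UNIV. \<integral>\<^sup>+s. G y s \<partial>distr (density M (\<lambda>x. K x y)) borel f)"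
    using \<gamma> G by (intro nn_integral_sum_slices[where A=borel]) (auto simp: joint_law_def joint_law_slice)
  also have "\<dots> = (\<Sum>y\<in>UNIV. \<integral>\<^sup>+x. ennreal (K x y) * G y (f x) \<partial>M)"
    using G f_measurable K_measurable by (simp add: nn_integral_distr nn_integral_density)
  also have "\<dots> = (\<integral>\<^sup>+x. (\<Sum>y\<in>UNIV. ennreal (K x y) * G y (f x)) \<partial>M)"
    using G f_measurable K_measurable by (intro nn_integral_sum[symmetric]) auto
  finally show ?thesis .
qed

lemma joint_law_fst:
  assumes \<gamma>: "joint_law M f K \<gamma>"
  shows "distr \<gamma> (distr M borel f) fst = distr M borel f"
proof (rule measure_eqI)
  fix B assume "B \<in> sets (distr \<gamma> (distr M borel f) fst)"
  then have B: "B \<in> sets borel" by simp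
  have sets_\<gamma>: "sets \<gamma> = sets (borel \<Otimes>\<^sub>M count_space UNIV)"
    using \<gamma> by (simp add: joint_law_def)
  have fst: "fst \<in> \<gamma> \<rightarrow>\<^sub>M distr M borel f"
    by (simp add: measurable_cong_sets[OF sets_\<gamma> refl])
  have "emeasure (distr \<gamma> (distr M borel f) fst) B = emeasure \<gamma> (fst -` B \<inter> space \<gamma>)"
    using fst B by (simp add: emeasure_distr)
  also have "\<dots> = (\<integral>\<^sup>+z. indicator (fst -` B \<inter> space \<gamma>) z \<partial>\<gamma>)"
    using measurable_sets[OF fst] B by simp
  also have "\<dots> = (\<integral>\<^sup>+z. indicator B (fst z) \<partial>\<gamma>)"
    by (rule nn_integral_cong) (simp add: indicator_def)
  also have "\<dots> = (\<integral>\<^sup>+x. (\<Sum>y\<in>UNIV. ennreal (K x y) * indicator B (f x)) \<partial>M)"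
    using nn_integral_joint_law[OF \<gamma>, of "\<lambda>_. indicator B"] B by simp
  also have "\<dots> = (\<integral>\<^sup>+x. indicator (f -` B) x \<partial>M)"
    using kernel K_nonneg
    by (intro nn_integral_cong) (simp add: sum_distrib_right[symmetric] markov_kernel_fin_def indicator_def)
  also have "\<dots> = emeasure (distr M borel f) B"
    using B f_measurable preimage_in_sets by (simp add: emeasure_distr space_M)
  finally show "emeasure (distr \<gamma> (distr M borel f) fst) B = emeasure (distr M borel f) B" .
qed simp

lemma half_l1_cost_joint_law:
  assumes \<gamma>: "joint_law M f K \<gamma>" and simplex: "\<And>x. f x \<in> prob_simplex"
  shows "half_l1_cost \<gamma> = enn2real (\<integral>\<^sup>+x. mismatch_prob (f x) (K x) \<partial>M)"
proof -
  have l1_measurable: "(\<lambda>s. l1dist s c) \<in> borel_measurable borel" for c :: "real^'k"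
    unfolding l1dist_def by measurable
  have sets_\<gamma>: "sets \<gamma> = sets (borel \<Otimes>\<^sub>M count_space UNIV)"
    using \<gamma> by (simp add: joint_law_def)
  have "(\<lambda>z. l1dist (fst z) (onehot (snd z))) \<in> borel_measurable \<gamma>"
    by (rule measurable_compose_countable'[where f="\<lambda>j z. l1dist (fst z) (onehot j)" and g=snd and I=UNIV])
       (auto simp: measurable_cong_sets[OF sets_\<gamma> refl] intro: measurable_compose[OF _ l1_measurable])
  then have "half_l1_cost \<gamma> = enn2real (\<integral>\<^sup>+z. l1dist (fst z) (onehot (snd z)) \<partial>\<gamma>) / 2"
    unfolding half_l1_cost_def by (subst integral_eq_nn_integral) (auto simp: case_prod_beta' l1dist_def)
  also have "(\<integral>\<^sup>+z. l1dist (fst z) (onehot (snd z)) \<partial>\<gamma>)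
      = (\<integral>\<^sup>+x. (\<Sum>y\<in>UNIV. ennreal (K x y) * l1dist (f x) (onehot y)) \<partial>M)"
    using nn_integral_joint_law[OF \<gamma>, of "\<lambda>y s. l1dist s (onehot y)"] l1_measurable by simp
  also have "\<dots> = (\<integral>\<^sup>+x. 2 * ennreal (mismatch_prob (f x) (K x)) \<partial>M)"
  proof (intro nn_integral_cong)
    fix x
    have "(\<Sum>y\<in>UNIV. ennreal (K x y) * l1dist (f x) (onehot y))
        = ennreal (\<Sum>y\<in>UNIV. K x y * l1dist (f x) (onehot y))"
      by (subst sum_ennreal[symmetric]) (auto simp: ennreal_mult K_nonneg l1dist_nonneg)
    also have "\<dots> = 2 * ennreal (mismatch_prob (f x) (K x))"
      using mismatch_prob_nonneg[OF simplex K_nonneg]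
      by (simp add: sum_mult_l1dist_onehot[OF simplex] ennreal_mult)
    finally show "(\<Sum>y\<in>UNIV. ennreal (K x y) * l1dist (f x) (onehot y))
        = 2 * ennreal (mismatch_prob (f x) (K x))" .
  qed
  also have "\<dots> = 2 * (\<integral>\<^sup>+x. mismatch_prob (f x) (K x) \<partial>M)"
    using borel_measurable_mismatch_prob[OF f_measurable K_measurable] by (intro nn_integral_cmult) auto
  finally show ?thesis by (simp add: enn2real_mult)
qed

lemma joint_law_snd_eq_pmf_iff:
  assumes "joint_law M f K \<gamma>"
  shows "(\<forall>j. emeasure \<gamma> (UNIV \<times> {j}) = pmf q j) \<longleftrightarrow> pushforward_eq M K q"
  using assms K_nonneg unfolding joint_law_def pushforward_eq_def
  by (auto simp: ennreal_inj integral_nonneg_AE)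

lemma exists_joint_law: "\<exists>\<gamma>. joint_law M f K \<gamma>"
proof -
  define P where "P = M \<Otimes>\<^sub>M count_space (UNIV :: 'k set)"
  have K_P: "(\<lambda>z. ennreal (K (fst z) (snd z))) \<in> borel_measurable P"
    unfolding P_def
    by (rule measurable_compose_countable'[where f="\<lambda>j z. ennreal (K (fst z) j)" and g=snd and I=UNIV])
       (use K_measurable in measurable)
  define D where "D = density P (\<lambda>z. K (fst z) (snd z))"
  define \<gamma> where "\<gamma> = distr D (borel \<Otimes>\<^sub>M count_space UNIV) (\<lambda>z. (f (fst z), snd z))"
  have "emeasure \<gamma> (B \<times> {y}) = ennreal (\<integral>x. indicator (f -` B) x * K x y \<partial>M)"
    if B: "B \<in> sets borel" for B y
  proof -
    have slice_P: "f -` B \<times> {y} \<in> sets P"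
      using preimage_in_sets[OF B] by (simp add: P_def)
    have "emeasure \<gamma> (B \<times> {y}) = emeasure D (f -` B \<times> {y})"
      using B f_measurable unfolding \<gamma>_def D_def P_def
      by (subst emeasure_distr) (auto intro!: arg_cong[where f="emeasure _"] simp: space_pair_measure space_M)
    also have "\<dots> = (\<integral>\<^sup>+z. ennreal (K (fst z) (snd z)) * indicator (f -` B \<times> {y}) z \<partial>P)"
      using slice_P K_P by (simp add: D_def emeasure_density)
    also have "\<dots> = (\<integral>\<^sup>+x. \<integral>\<^sup>+j. ennreal (K x j) * indicator (f -` B \<times> {y}) (x, j) \<partial>count_space UNIV \<partial>M)"
      using slice_P K_P unfolding P_def
      by (subst sigma_finite_measure.nn_integral_fst[OF sigma_finite_measure_count_space_finite, symmetric]) auto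
    also have "\<dots> = (\<integral>\<^sup>+x. ennreal (K x y) * indicator (f -` B) x \<partial>M)"
      by (intro nn_integral_cong) (simp add: nn_integral_count_space_finite indicator_def if_distrib)
    also have "\<dots> = ennreal (\<integral>x. indicator (f -` B) x * K x y \<partial>M)"
      using preimage_in_sets[OF B] K_measurable
      by (simp add: ennreal_integral_indicator_K emeasure_density)
    finally show ?thesis .
  qed
  then have "joint_law M f K \<gamma>"
    by (simp add: joint_law_def \<gamma>_def)
  then show ?thesis ..
qed

end

lemma couplings_label_iff:
  fixes P :: "'a::topological_space measure" and q :: "'k::finite pmf"
  assumes sets_P: "sets P = sets borel"
  shows "\<gamma> \<in> couplings P (measure_pmf q) \<longleftrightarrow>
    sets \<gamma> = sets (borel \<Otimes>\<^sub>M count_space UNIV) \<and> distr \<gamma> P fst = P \<and>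
    (\<forall>j. emeasure \<gamma> (UNIV \<times> {j}) = pmf q j)"
proof -
  have "sets (P \<Otimes>\<^sub>M measure_pmf q) = sets (borel \<Otimes>\<^sub>M count_space UNIV)"
    using sets_P by (intro sets_pair_measure_cong) simp_all
  then show ?thesis
    unfolding couplings_def by (auto simp: distr_snd_eq_pmf_iff[where A=borel])
qed

lemma markov_kernel_fin_comp:
  "f \<in> M \<rightarrow>\<^sub>M N \<Longrightarrow> markov_kernel_fin N K \<Longrightarrow> markov_kernel_fin M (\<lambda>x. K (f x))"
  unfolding markov_kernel_fin_def by (auto intro: measurable_compose)

locale classification_problem =
  fixes \<mu> :: "('x::topological_space \<times> 'k::finite) measure" and f :: "'x \<Rightarrow> real^'k"
  assumes prob_space_\<mu>: "prob_space \<mu>"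
    and sets_\<mu>: "sets \<mu> = sets (borel \<Otimes>\<^sub>M count_space UNIV)"
    and f_measurable: "f \<in> borel_measurable (distr \<mu> borel fst)"
    and f_simplex: "f x \<in> prob_simplex"
    and f_condexp: "A \<in> sets borel \<Longrightarrow>
          (\<integral>x. indicator A x * f x $ i \<partial>distr \<mu> borel fst) = measure \<mu> (A \<times> {i})"
begin

abbreviation PX :: "'x measure" where
  "PX \<equiv> distr \<mu> borel fst"

lemma prob_space_PX: "prob_space PX"
  using prob_space_\<mu> by (rule prob_space.prob_space_distr) (simp add: measurable_cong_sets[OF sets_\<mu> refl])

lemma measurable_PX_iff [simp]: "g \<in> PX \<rightarrow>\<^sub>M N \<longleftrightarrow> g \<in> borel \<rightarrow>\<^sub>M N"
  using measurable_cong_sets[of PX borel N N] by simp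

lemma label_kernel_PX: "markov_kernel_fin PX K \<Longrightarrow> label_kernel PX f K"
  using prob_space_PX f_measurable by (simp add: label_kernel_def label_kernel_axioms_def)

lemma f_component_measurable: "(\<lambda>x. f x $ i) \<in> borel_measurable borel"
  using measurable_compose[OF f_measurable borel_measurable_nth] by simp

lemma f_nonneg: "0 \<le> f x $ i"
  and f_le_1: "f x $ i \<le> 1"
  using f_simplex[of x] nonneg_sum_eq_1_le_1[of "\<lambda>i. f x $ i" i] by (auto simp: prob_simplex_def)

lemma emeasure_label_slice:
  assumes A: "A \<in> sets borel"
  shows "emeasure \<mu> (A \<times> {i}) = emeasure (density PX (\<lambda>x. f x $ i)) A"
proof -
  interpret PX: prob_space PX by (rule prob_space_PX)
  have "emeasure (density PX (\<lambda>x. f x $ i)) A = ennreal (\<integral>x. indicator A x * f x $ i \<partial>PX)"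
    using A f_component_measurable f_nonneg f_le_1
    by (intro emeasure_density_eq_integral PX.integrable_const_bound[where B=1]) auto
  also have "\<dots> = emeasure \<mu> (A \<times> {i})"
    using A sets_\<mu> f_condexp prob_space_\<mu> by (simp add: finite_measure.emeasure_eq_measure prob_space_def)
  finally show ?thesis ..
qed

lemma nn_integral_label:
  assumes G: "\<And>i. G i \<in> borel_measurable borel"
  shows "(\<integral>\<^sup>+z. G (snd z) (fst z) \<partial>\<mu>) = (\<integral>\<^sup>+x. (\<Sum>i\<in>UNIV. ennreal (f x $ i) * G i x) \<partial>PX)"
proof -
  have "(\<integral>\<^sup>+z. G (snd z) (fst z) \<partial>\<mu>) = (\<Sum>i\<in>UNIV. \<integral>\<^sup>+x. G i x \<partial>density PX (\<lambda>x. f x $ i))"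
    using G sets_\<mu> by (intro nn_integral_sum_slices[where A=borel]) (auto simp: emeasure_label_slice)
  also have "\<dots> = (\<Sum>i\<in>UNIV. \<integral>\<^sup>+x. ennreal (f x $ i) * G i x \<partial>PX)"
    using G f_component_measurable by (simp add: nn_integral_density)
  also have "\<dots> = (\<integral>\<^sup>+x. (\<Sum>i\<in>UNIV. ennreal (f x $ i) * G i x) \<partial>PX)"
    using G f_component_measurable by (intro nn_integral_sum[symmetric]) auto
  finally show ?thesis .
qed

lemma err_eq_mismatch_prob:
  assumes K: "markov_kernel_fin PX K"
  shows "err \<mu> K = enn2real (\<integral>\<^sup>+x. mismatch_prob (f x) (K x) \<partial>PX)"
proof -
  interpret label_kernel PX f K by (rule label_kernel_PX[OF K])
  define a where "a i x = (\<Sum>j\<in>UNIV - {i}. K x j)" for i x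
  have a: "a i \<in> borel_measurable borel" "0 \<le> a i x" for i x
    using K_measurable K_nonneg unfolding a_def by (auto intro!: sum_nonneg borel_measurable_sum)
  have "(\<lambda>z. a (snd z) (fst z)) \<in> borel_measurable \<mu>"
    by (rule measurable_compose_countable'[where f="\<lambda>i z. a i (fst z)" and g=snd and I=UNIV])
       (auto simp: measurable_cong_sets[OF sets_\<mu> refl] a intro: measurable_compose[OF _ a(1)])
  moreover have "err \<mu> K = (\<integral>z. a (snd z) (fst z) \<partial>\<mu>)"
    unfolding err_def a_def by (simp add: case_prod_beta')
  ultimately have "err \<mu> K = enn2real (\<integral>\<^sup>+z. a (snd z) (fst z) \<partial>\<mu>)"
    using a(2) by (simp add: integral_eq_nn_integral)
  also have "(\<integral>\<^sup>+z. a (snd z) (fst z) \<partial>\<mu>) = (\<integral>\<^sup>+x. (\<Sum>i\<in>UNIV. ennreal (f x $ i) * a i x) \<partial>PX)"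
    using nn_integral_label[of "\<lambda>i x. ennreal (a i x)"] a by simp
  also have "\<dots> = (\<integral>\<^sup>+x. mismatch_prob (f x) (K x) \<partial>PX)"
    by (intro nn_integral_cong)
       (simp add: mismatch_prob_def a_def ennreal_mult f_nonneg K_nonneg sum_nonneg flip: sum_ennreal)
  finally show ?thesis .
qed

lemma err_eq_half_l1_cost:
  assumes K: "markov_kernel_fin PX K" and \<gamma>: "joint_law PX f K \<gamma>"
  shows "err \<mu> K = half_l1_cost \<gamma>"
proof -
  interpret label_kernel PX f K by (rule label_kernel_PX[OF K])
  show ?thesis
    using f_simplex by (simp add: err_eq_mismatch_prob[OF K] half_l1_cost_joint_law[OF \<gamma>])
qed

lemma joint_law_in_couplings:
  assumes K: "markov_kernel_fin PX K" and \<gamma>: "joint_law PX f K \<gamma>"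
  shows "\<gamma> \<in> couplings (distr PX borel f) (measure_pmf q) \<longleftrightarrow> pushforward_eq PX K q"
proof -
  interpret label_kernel PX f K by (rule label_kernel_PX[OF K])
  have "sets \<gamma> = sets (borel \<Otimes>\<^sub>M count_space UNIV)"
    using \<gamma> by (simp add: joint_law_def)
  then show ?thesis
    using couplings_label_iff[of "distr PX borel f" \<gamma> q] joint_law_fst[OF \<gamma>] joint_law_snd_eq_pmf_iff[OF \<gamma>]
    by simp
qed

lemma disintegration_joint_law:
  assumes \<kappa>: "markov_kernel_fin borel \<kappa>" and sets_\<gamma>: "sets \<gamma> = sets (borel \<Otimes>\<^sub>M count_space UNIV)"
    and slices: "\<forall>B\<in>sets borel. \<forall>y. emeasure \<gamma> (B \<times> {y}) =
            ennreal (\<integral>s. indicator B s * \<kappa> s y \<partial>distr PX borel f)"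
  shows "joint_law PX f (\<lambda>x. \<kappa> (f x)) \<gamma>"
  unfolding joint_law_def
proof (intro conjI ballI allI)
  fix B :: "(real^'k) set" and y assume B: "B \<in> sets borel"
  have "(\<integral>s. indicator B s * \<kappa> s y \<partial>distr PX borel f) = (\<integral>x. indicator (f -` B) x * \<kappa> (f x) y \<partial>PX)"
    using B \<kappa> f_measurable
    by (subst integral_distr) (auto simp: markov_kernel_fin_def indicator_def intro!: borel_measurable_times)
  then show "emeasure \<gamma> (B \<times> {y}) = ennreal (\<integral>x. indicator (f -` B) x * \<kappa> (f x) y \<partial>PX)"
    using slices B by simp
qed (rule sets_\<gamma>)

lemma classifier_joint_law:
  assumes K: "markov_kernel_fin PX K" and q: "pushforward_eq PX K q"
  shows "\<exists>\<gamma>. joint_law PX f K \<gamma>"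
    and "joint_law PX f K \<gamma> \<Longrightarrow>
           \<gamma> \<in> couplings (distr PX borel f) (measure_pmf q) \<and> err \<mu> K = half_l1_cost \<gamma>"
  using label_kernel.exists_joint_law[OF label_kernel_PX[OF K]]
    joint_law_in_couplings[OF K] err_eq_half_l1_cost[OF K] q by auto

lemma coupling_disintegration_classifier:
  assumes \<gamma>: "\<gamma> \<in> couplings (distr PX borel f) (measure_pmf q)" and \<kappa>: "markov_kernel_fin borel \<kappa>"
    and slices: "\<forall>B\<in>sets borel. \<forall>y. emeasure \<gamma> (B \<times> {y}) =
            ennreal (\<integral>s. indicator B s * \<kappa> s y \<partial>distr PX borel f)"
  shows "markov_kernel_fin PX (\<lambda>x. \<kappa> (f x)) \<and> pushforward_eq PX (\<lambda>x. \<kappa> (f x)) q \<and>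
         err \<mu> (\<lambda>x. \<kappa> (f x)) = half_l1_cost \<gamma>"
proof -
  have K: "markov_kernel_fin PX (\<lambda>x. \<kappa> (f x))"
    using f_measurable \<kappa> by (rule markov_kernel_fin_comp)
  have sets_\<gamma>: "sets \<gamma> = sets (borel \<Otimes>\<^sub>M count_space UNIV)"
    using \<gamma> couplings_label_iff[of "distr PX borel f" \<gamma> q] by simp
  have "joint_law PX f (\<lambda>x. \<kappa> (f x)) \<gamma>"
    using \<kappa> sets_\<gamma> slices by (rule disintegration_joint_law)
  then show ?thesis
    using K \<gamma> joint_law_in_couplings[OF K] err_eq_half_l1_cost[OF K] by simp
qed

end

theorem lemma3p2:
  fixes \<mu> :: "('x::polish_space \<times> 'k::finite) measure"
    and fstar :: "'x \<Rightarrow> real^'k"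
    and q :: "'k pmf"
  assumes k2: "CARD('k) \<ge> 2"
    and prob: "prob_space \<mu>"
    and sets_mu: "sets \<mu> = sets (borel \<Otimes>\<^sub>M count_space UNIV)"
    and fstar_meas: "fstar \<in> borel_measurable (distr \<mu> borel fst)"
    and fstar_simplex: "\<forall>x. fstar x \<in> prob_simplex"
    and fstar_condexp: "\<forall>A\<in>sets borel. \<forall>i.
          (\<integral>x. indicator A x * fstar x $ i \<partial>(distr \<mu> borel fst)) = measure \<mu> (A \<times> {i})"
  shows
    "(\<forall>K. markov_kernel_fin (distr \<mu> borel fst) K \<and> pushforward_eq (distr \<mu> borel fst) K q \<longrightarrow>
        (\<exists>\<gamma>. sets \<gamma> = sets (borel \<Otimes>\<^sub>M count_space UNIV) \<and>
              (\<forall>B\<in>sets borel. \<forall>y. emeasure \<gamma> (B \<times> {y}) =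
                  ennreal (\<integral>x. indicator (fstar -` B) x * K x y \<partial>(distr \<mu> borel fst)))) \<and>
        (\<forall>\<gamma>. sets \<gamma> = sets (borel \<Otimes>\<^sub>M count_space UNIV) \<and>
              (\<forall>B\<in>sets borel. \<forall>y. emeasure \<gamma> (B \<times> {y}) =
                  ennreal (\<integral>x. indicator (fstar -` B) x * K x y \<partial>(distr \<mu> borel fst)))
           \<longrightarrow> \<gamma> \<in> couplings (distr (distr \<mu> borel fst) borel fstar) (measure_pmf q) \<and>
               err \<mu> K = half_l1_cost \<gamma>))
     \<and>
     (\<forall>\<gamma> \<kappa>. \<gamma> \<in> couplings (distr (distr \<mu> borel fst) borel fstar) (measure_pmf q) \<and>
        markov_kernel_fin borel \<kappa> \<and>
        (\<forall>B\<in>sets borel. \<forall>y. emeasure \<gamma> (B \<times> {y}) =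
            ennreal (\<integral>s. indicator B s * \<kappa> s y \<partial>(distr (distr \<mu> borel fst) borel fstar)))
      \<longrightarrow> markov_kernel_fin (distr \<mu> borel fst) (\<lambda>x. \<kappa> (fstar x)) \<and>
          pushforward_eq (distr \<mu> borel fst) (\<lambda>x. \<kappa> (fstar x)) q \<and>
          err \<mu> (\<lambda>x. \<kappa> (fstar x)) = half_l1_cost \<gamma>)"
proof -
  interpret classification_problem \<mu> fstar
    using prob sets_mu fstar_meas fstar_simplex fstar_condexp by (simp add: classification_problem_def)
  have "(\<exists>\<gamma>. joint_law PX fstar K \<gamma>) \<and>
        (\<forall>\<gamma>. joint_law PX fstar K \<gamma> \<longrightarrow>
             \<gamma> \<in> couplings (distr PX borel fstar) (measure_pmf q) \<and> err \<mu> K = half_l1_cost \<gamma>)"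
    if "markov_kernel_fin PX K \<and> pushforward_eq PX K q" for K
    using that classifier_joint_law by blast
  then show ?thesis
    using coupling_disintegration_classifier[where q=q] unfolding joint_law_def by blast
qed

end
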